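(* Let $f\in\mathcal S_{\mathbf M}$, let $\|\cdot\|$ be either the Luxemburg norm $\|\cdot\|_{\mathbf M}$ or the Orlicz norm $\|\cdot\|^*_{\mathbf M}$ (the same choice throughout), and suppose that for some $\beta>0$, $E_n(f)=\mathcal O(n^{-\beta})$ as $n\to\infty$. Then for any $\alpha>0$, as $t\to0+$, $$\omega_\alpha(f,t)=\begin{cases}\mathcal O(t^\beta), & \beta<\alpha,\\ \mathcal O(t^\alpha|\ln t|), & \beta=\alpha,\\ \mathcal O(t^\alpha), & \beta>\alpha.\end{cases}$$
   Context: $L$ is the space of $2\pi$-periodic Lebesgue integrable functions, with Fourier coefficients $\widehat f(k)=(2\pi)^{-1}\int_0^{2\pi}f(x)e^{-\mathrm{i}kx}\,dx$. Let $\mathbf M=\{M_k\}_{k\in\mathbb Z}$ be a sequence of Orlicz functions on $[0,\infty)$ (nondecreasing, convex, $M_k(0)=0$, $M_k(u)\to\infty$ as $u\to\infty$). For a complex sequence $c=\{c_k\}_{k\in\mathbb Z}$: Luxemburg norm $\|c\|_{\mathbf M}=\inf\{a>0:\sum_kM_k(|c_k|/a)\le1\}$; with $\tilde M_k(v)=\sup\{uv-M_k(u):u\ge0\}$ and $\Lambda$ the set of positive sequences $\lambda$ with $\sum_k\tilde M_k(\lambda_k)\le1$, Orlicz norm $\|c\|^*_{\mathbf M}=\sup\{\sum_k\lambda_k|c_k|:\lambda\in\Lambda\}$. $\mathcal S_{\mathbf M}$ is the space of $f\in L$ with $\|\{\widehat f(k)\}\|_{\mathbf M}<\infty$; norms of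 $f$ are those of $\{\widehat f(k)\}$. $E_n(f)=\inf\{\|f-t\|:t\in\mathcal T_{n-1}\}$, $\mathcal T_{n-1}$ the trigonometric polynomials $\sum_{|k|\le n-1}c_ke^{\mathrm{i}kx}$. For $\alpha>0$, $\Delta_h^\alpha f(x)=\sum_{j\ge0}(-1)^j\binom{\alpha}{j}f(x-jh)$, with Fourier coefficients $(1-e^{-\mathrm{i}kh})^\alpha\widehat f(k)$, and $\omega_\alpha(f,\delta)=\sup_{|h|\le\delta}\|\Delta_h^\alpha f\|$. *)

theory Defs
  imports "HOL-Analysis.Analysis" "HOL-Library.Landau_Symbols"
begin

definition in_L :: "(real \<Rightarrow> complex) \<Rightarrow> bool" where
  "in_L f \<longleftrightarrow> set_integrable lborel {0..2*pi} f \<and> (\<forall>x. f (x + 2*pi) = f x)"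

definition fourier_coeff :: "(real \<Rightarrow> complex) \<Rightarrow> int \<Rightarrow> complex" where
  "fourier_coeff f k =
     set_lebesgue_integral lborel {0..2*pi} (\<lambda>x. f x * exp (- \<i> * of_int k * of_real x)) / (2 * pi)"

text \<open>Orlicz function (only its values on [0,oo) matter).\<close>
definition orlicz_fn :: "(real \<Rightarrow> real) \<Rightarrow> bool" where
  "orlicz_fn M \<longleftrightarrow> mono_on {0..} M \<and> convex_on {0..} M \<and> M 0 = 0 \<and> filterlim M at_top at_top"

definition lux_set :: "(int \<Rightarrow> real \<Rightarrow> real) \<Rightarrow> (int \<Rightarrow> complex) \<Rightarrow> real set" where
  "lux_set Ms c = {a. a > 0 \<and> (\<lambda>k. Ms k (cmod (c k) / a)) summable_on UNIV
                       \<and> (\<Sum>\<^sub>\<infinity>k. Ms k (cmod (c k) / a)) \<le> 1}"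

definition lux_norm :: "(int \<Rightarrow> real \<Rightarrow> real) \<Rightarrow> (int \<Rightarrow> complex) \<Rightarrow> real" where
  "lux_norm Ms c = Inf (lux_set Ms c)"

text \<open>Complementary function (the sup is finite exactly when the set is bounded above).\<close>
definition conj_fn :: "(real \<Rightarrow> real) \<Rightarrow> real \<Rightarrow> real" where
  "conj_fn M v = Sup ((\<lambda>u. u * v - M u) ` {0..})"

definition Lambda_set :: "(int \<Rightarrow> real \<Rightarrow> real) \<Rightarrow> (int \<Rightarrow> real) set" where
  "Lambda_set Ms = {lam. (\<forall>k. lam k \<ge> 0 \<and> bdd_above ((\<lambda>u. u * lam k - Ms k u) ` {0..}))
        \<and> (\<lambda>k. conj_fn (Ms k) (lam k)) summable_on UNIV
        \<and> (\<Sum>\<^sub>\<infinity>k. conj_fn (Ms k) (lam k)) \<le> 1}"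

definition orlicz_norm :: "(int \<Rightarrow> real \<Rightarrow> real) \<Rightarrow> (int \<Rightarrow> complex) \<Rightarrow> real" where
  "orlicz_norm Ms c = Sup ((\<lambda>lam. \<Sum>\<^sub>\<infinity>k. lam k * cmod (c k)) ` Lambda_set Ms)"

text \<open>Membership in S_M: the Luxemburg norm of the Fourier coefficients is finite.\<close>
definition in_SM :: "(int \<Rightarrow> real \<Rightarrow> real) \<Rightarrow> (real \<Rightarrow> complex) \<Rightarrow> bool" where
  "in_SM Ms f \<longleftrightarrow> in_L f \<and> lux_set Ms (fourier_coeff f) \<noteq> {}"

definition fnorm :: "((int \<Rightarrow> complex) \<Rightarrow> real) \<Rightarrow> (real \<Rightarrow> complex) \<Rightarrow> real" where
  "fnorm N f = N (fourier_coeff f)"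

definition trig_polys :: "int \<Rightarrow> (real \<Rightarrow> complex) set" where
  "trig_polys m = {t. \<exists>c::int \<Rightarrow> complex. t = (\<lambda>x. \<Sum>k\<in>{-m..m}. c k * exp (\<i> * of_int k * of_real x))}"

definition best_approx :: "((int \<Rightarrow> complex) \<Rightarrow> real) \<Rightarrow> (real \<Rightarrow> complex) \<Rightarrow> nat \<Rightarrow> real" where
  "best_approx N f n = Inf ((\<lambda>t. fnorm N (\<lambda>x. f x - t x)) ` trig_polys (int n - 1))"

definition frac_diff :: "real \<Rightarrow> real \<Rightarrow> (real \<Rightarrow> complex) \<Rightarrow> real \<Rightarrow> complex" where
  "frac_diff \<alpha> h f x = (\<Sum>j. of_real ((-1) ^ j * (\<alpha> gchoose j)) * f (x - real j * h))"

definition modulus :: "((int \<Rightarrow> complex) \<Rightarrow> real) \<Rightarrow> real \<Rightarrow> (real \<Rightarrow> complex) \<Rightarrow> real \<Rightarrow> real" where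
  "modulus N \<alpha> f \<delta> = Sup ((\<lambda>h. fnorm N (frac_diff \<alpha> h f)) ` {h. \<bar>h\<bar> \<le> \<delta>})"

end

theory Submission
  imports Defs
begin

(*
  The Fourier coefficients of the fractional difference are those of f multiplied by the symbol
  (1 - e^(-ikh))^alpha, whose modulus is at most min (2, |kh|)^alpha.  Both sequence norms are
  monotone in the moduli of the coefficients and subadditive, and the norm of the tail
  (f^(k))_(|k| >= n) is at most E_n(f), because subtracting a polynomial of degree < n does not
  change those coefficients.  Cutting the frequencies into the dyadic blocks
  2^m <= |k| < 2^(m+1), m < n, and the tail |k| >= 2^n, where 2^n t is about 1, gives

    omega_alpha(f, t) <= 2^alpha E_(2^n)(f) + sum_(m<n) (2^(m+1) t)^alpha E_(2^m)(f).

  With E_j(f) <= K j^(-beta) the right-hand side is K 2^alpha (t^beta + t^alpha sum_(m<n) q^m)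
  for q = 2^(alpha - beta), and the three rates are those of this geometric sum.
*)

section \<open>The symbol of the fractional difference\<close>

lemma summable_abs_gchoose:
  fixes \<alpha> :: real
  assumes "\<alpha> > 0"
  shows "summable (\<lambda>j. \<bar>\<alpha> gchoose j\<bar>)"
proof -
  define A where "A j = \<bar>\<alpha> gchoose j\<bar>" for j
  define J where "J = nat \<lceil>\<alpha>\<rceil>"
  have recursion: "real (Suc j) * A (Suc j) = (real j - \<alpha>) * A j" if "J \<le> j" for j
  proof -
    have "real (Suc j) * (\<alpha> gchoose Suc j) = (\<alpha> - real j) * (\<alpha> gchoose j)"
      using gbinomial_mult_1[of \<alpha> j] by (simp add: algebra_simps)
    moreover have "\<alpha> \<le> real j" using that unfolding J_def by linarith
    ultimately show ?thesis
      by (metis A_def abs_mult abs_of_nat abs_minus_commute abs_of_nonneg diff_ge_0_iff_ge)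
  qed
  \<comment> \<open>Beyond \<open>J\<close> the recursion telescopes: \<open>\<alpha> A j = j A j - (j+1) A (j+1)\<close>.\<close>
  have telescope: "\<alpha> * (\<Sum>j<n. A j) + real n * A n = \<alpha> * (\<Sum>j<J. A j) + real J * A J"
    if "J \<le> n" for n
    using that
  proof (induction n rule: dec_induct)
    case (step n)
    then show ?case using recursion[OF step(1)] by (simp add: algebra_simps)
  qed simp
  have "(\<Sum>j<n. A j) \<le> (\<Sum>j<J. A j) + real J * A J / \<alpha>" for n
  proof (cases "J \<le> n")
    case True
    have "0 \<le> real n * A n" by (simp add: A_def)
    then have "\<alpha> * (\<Sum>j<n. A j) \<le> \<alpha> * (\<Sum>j<J. A j) + real J * A J"
      using telescope[OF True] by linarith
    then show ?thesis using assms by (simp add: field_simps)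
  next
    case False
    then have "(\<Sum>j<n. A j) \<le> (\<Sum>j<J. A j)" by (intro sum_mono2) (auto simp: A_def)
    then show ?thesis using assms by (simp add: A_def add_increasing2)
  qed
  then show ?thesis unfolding A_def by (intro summableI_nonneg_bounded) auto
qed

definition frac_diff_symbol :: "real \<Rightarrow> complex \<Rightarrow> complex" where
  "frac_diff_symbol \<alpha> z = (\<Sum>j. of_real ((-1)^j * (\<alpha> gchoose j)) * z^j)"

lemma summable_norm_frac_diff_coeffs:
  assumes "\<alpha> > 0"
  shows "summable (\<lambda>j. norm (of_real ((-1)^j * (\<alpha> gchoose j)) :: complex))"
  using summable_abs_gchoose[OF assms] by (simp add: norm_mult norm_power)

lemma continuous_on_powser_segment:
  fixes c :: "nat \<Rightarrow> complex"
  assumes c: "summable (\<lambda>j. norm (c j))" and z: "cmod z \<le> 1"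
  shows "continuous_on {0..1} (\<lambda>r. \<Sum>j. c j * (of_real r * z)^j)"
proof -
  have uniform: "uniform_limit {0..1} (\<lambda>n r. \<Sum>j<n. c j * (of_real r * z)^j)
      (\<lambda>r. \<Sum>j. c j * (of_real r * z)^j) sequentially"
  proof (rule Weierstrass_m_test[OF _ c])
    fix j and r :: real assume "r \<in> {0..1}"
    then have "(\<bar>r\<bar> * cmod z) ^ j \<le> 1" using z by (intro power_le_one) (auto intro: mult_le_one)
    then show "norm (c j * (of_real r * z)^j) \<le> norm (c j)"
      by (simp add: norm_mult norm_power mult_left_le power_mult_distrib)
  qed
  show ?thesis
    by (rule uniform_limit_theorem[OF always_eventually[OF allI] uniform]) (auto intro!: continuous_intros)
qed

lemma norm_frac_diff_symbol:
  fixes z :: complex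
  assumes "\<alpha> > 0" and "cmod z = 1"
  shows "cmod (frac_diff_symbol \<alpha> z) = cmod (1 - z) powr \<alpha>"
proof -
  define c :: "nat \<Rightarrow> complex" where "c j = of_real ((-1)^j * (\<alpha> gchoose j))" for j
  define g where "g r = (\<Sum>j. c j * (of_real r * z)^j)" for r :: real
  have "continuous_on {0..1} g"
    unfolding g_def c_def using summable_norm_frac_diff_coeffs[OF assms(1)] assms(2)
    by (intro continuous_on_powser_segment) auto
  then have lim_g: "((\<lambda>r. cmod (g r)) \<longlongrightarrow> cmod (g 1)) (at_left 1)"
    by (intro continuous_on_Icc_at_leftD continuous_on_norm) auto
  have lim_pow: "((\<lambda>r. cmod (1 - of_real r * z) powr \<alpha>) \<longlongrightarrow> cmod (1 - z) powr \<alpha>) (at_left 1)"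
    using assms(1) by (auto intro!: tendsto_eq_intros)
  \<comment> \<open>For \<open>r < 1\<close> this is the binomial series of \<open>(1 - r z) powr \<alpha>\<close>; continuity of both sides
     at \<open>r = 1\<close> carries the identity to the unit circle.\<close>
  have "cmod (g r) = cmod (1 - of_real r * z) powr \<alpha>" if "r \<in> {0<..<1}" for r
  proof -
    have "norm (- (of_real r * z)) < 1" using that by (simp add: norm_mult assms(2))
    then have "(\<lambda>j. (of_real \<alpha> gchoose j) * (- (of_real r * z))^j) sums (1 + - (of_real r * z)) powr of_real \<alpha>"
      by (rule gen_binomial_complex)
    moreover have "(of_real \<alpha> gchoose j) * (- (of_real r * z))^j = c j * (of_real r * z)^j" for j
      by (simp add: c_def gbinomial_prod_rev power_minus[of "of_real r * z"])
    ultimately have "(\<lambda>j. c j * (of_real r * z)^j) sums (1 - of_real r * z) powr of_real \<alpha>"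
      by simp
    then show ?thesis
      using that by (simp add: g_def sums_iff norm_powr_real_powr')
  qed
  then have ev: "eventually (\<lambda>r. cmod (g r) = cmod (1 - of_real r * z) powr \<alpha>) (at_left 1)"
    using eventually_at_left_real[of 0 "1::real"] by (auto elim: eventually_mono)
  have "((\<lambda>r. cmod (g r)) \<longlongrightarrow> cmod (1 - z) powr \<alpha>) (at_left 1)"
    by (subst tendsto_cong[OF ev]) (rule lim_pow)
  with lim_g have "cmod (g 1) = cmod (1 - z) powr \<alpha>"
    by (rule tendsto_unique[rotated 1]) simp
  then show ?thesis by (simp add: g_def c_def frac_diff_symbol_def)
qed

lemma norm_one_minus_cis: "cmod (1 - cis \<theta>) = 2 * \<bar>sin (\<theta> / 2)\<bar>"
proof -
  have "cmod (1 - cis \<theta>) = sqrt ((1 - cos \<theta>)^2 + (sin \<theta>)^2)"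
    by (simp add: cmod_def)
  also have "(1 - cos \<theta>)^2 + (sin \<theta>)^2 = (2 * sin (\<theta> / 2))^2"
    using sin_cos_squared_add[of \<theta>] cos_double_sin[of "\<theta> / 2"]
    by (simp add: power2_eq_square algebra_simps)
  also have "sqrt ((2 * sin (\<theta> / 2))^2) = 2 * \<bar>sin (\<theta> / 2)\<bar>"
    by (simp only: real_sqrt_abs abs_mult abs_numeral)
  finally show ?thesis .
qed

lemma
  assumes "\<alpha> > 0"
  shows norm_frac_diff_symbol_cis_le_2: "cmod (frac_diff_symbol \<alpha> (cis \<theta>)) \<le> 2 powr \<alpha>"
    and norm_frac_diff_symbol_cis_le_abs: "cmod (frac_diff_symbol \<alpha> (cis \<theta>)) \<le> \<bar>\<theta>\<bar> powr \<alpha>"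
    and frac_diff_symbol_1: "frac_diff_symbol \<alpha> 1 = 0"
proof -
  note norm_symbol = norm_frac_diff_symbol[OF assms]
  show "cmod (frac_diff_symbol \<alpha> (cis \<theta>)) \<le> 2 powr \<alpha>"
    using abs_sin_le_one[of "\<theta> / 2"] assms
    by (simp add: norm_symbol norm_one_minus_cis powr_mono2)
  show "cmod (frac_diff_symbol \<alpha> (cis \<theta>)) \<le> \<bar>\<theta>\<bar> powr \<alpha>"
    using abs_sin_x_le_abs_x[of "\<theta> / 2"] assms
    by (simp add: norm_symbol norm_one_minus_cis powr_mono2)
  show "frac_diff_symbol \<alpha> 1 = 0"
    using norm_symbol[of 1] assms by simp
qed

section \<open>Integrals of periodic functions\<close>

lemma periodic_reduce:
  fixes g :: "real \<Rightarrow> 'a"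
  assumes "\<And>x. g (x + T) = g x" and "T > 0"
  shows "g (T * frac (x / T)) = g x"
proof -
  interpret periodic_fun_simple g T by unfold_locales (rule assms(1))
  have "T * frac (x / T) = x - of_int \<lfloor>x / T\<rfloor> * T"
    using assms(2) by (simp add: frac_def algebra_simps)
  then show ?thesis by (simp add: minus_of_int)
qed

lemma frac_scaled_bounds:
  fixes T :: real
  assumes "T > 0"
  shows "0 \<le> T * frac (x / T)" "T * frac (x / T) < T"
  using assms frac_lt_1[of "x / T"] by simp_all

lemma periodic_borel_measurable:
  fixes g :: "real \<Rightarrow> 'a::{banach, second_countable_topology}"
  assumes per: "\<And>x. g (x + T) = g x" and T: "T > 0"
    and int: "set_integrable lborel {0..T} g"
  shows "g \<in> borel_measurable lborel"
proof -
  define G where "G y = indicator {0..T} y *\<^sub>R g y" for y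
  have "G \<in> borel_measurable lborel"
    using int unfolding set_integrable_def G_def by (rule borel_measurable_integrable)
  moreover have "g = (\<lambda>x. G (T * frac (x / T)))"
    using periodic_reduce[of g T, OF per T] frac_scaled_bounds[OF T]
    by (auto simp: G_def fun_eq_iff less_imp_le)
  ultimately show ?thesis by (simp add: frac_def) measurable
qed

lemma
  fixes g :: "real \<Rightarrow> 'a::{banach, second_countable_topology}"
  assumes "g \<in> borel_measurable lborel"
  shows set_integrable_Icc_iff_Ico:
      "set_integrable lborel {a..b} g \<longleftrightarrow> set_integrable lborel {a..<b} g"
    and set_integral_Icc_eq_Ico:
      "(LINT x:{a..b}|lborel. g x) = (LINT x:{a..<b}|lborel. g x)"
proof -
  have ae: "AE x in lborel. indicator {a..b} x *\<^sub>R g x = indicator {a..<b} x *\<^sub>R g x"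
    using AE_lborel_singleton[of b] by eventually_elim (auto simp: indicator_def)
  show "set_integrable lborel {a..b} g \<longleftrightarrow> set_integrable lborel {a..<b} g"
    unfolding set_integrable_def using assms by (intro integrable_cong_AE[OF _ _ ae]) auto
  show "(LINT x:{a..b}|lborel. g x) = (LINT x:{a..<b}|lborel. g x)"
    unfolding set_lebesgue_integral_def using assms by (intro integral_cong_AE[OF _ _ ae]) auto
qed

lemma periodic_set_integral_shift_Ico:
  fixes g :: "real \<Rightarrow> 'a::{banach, second_countable_topology}"
  assumes per: "\<And>x. g (x + T) = g x" and r: "0 \<le> r" "r < T"
    and int: "set_integrable lborel {0..<T} g"
  shows "set_integrable lborel {0..<T} (\<lambda>x. g (x + r))"
    and "(LINT x:{0..<T}|lborel. g (x + r)) = (LINT x:{0..<T}|lborel. g x)"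
proof -
  define H1 where "H1 y = indicator {r..<T} y *\<^sub>R g y" for y
  define H2 where "H2 y = indicator {0..<r} y *\<^sub>R g y" for y
  have H1: "integrable lborel H1" and H2: "integrable lborel H2"
    using set_integrable_subset[OF int] r unfolding H1_def H2_def set_integrable_def by auto
  have split: "indicator {0..<T} y *\<^sub>R g y = H1 y + H2 y" for y
    using r by (auto simp: H1_def H2_def indicator_def)
  \<comment> \<open>The part of \<open>[0, T)\<close> pushed beyond \<open>T\<close> by the shift wraps around to \<open>[0, r)\<close>.\<close>
  have wrap: "indicator {0..<T} x *\<^sub>R g (x + r) = H1 (r + x) + H2 (r - T + x)" for x
  proof (cases "x + r < T")
    case True
    then show ?thesis using r by (simp add: H1_def H2_def indicator_def add.commute[of x r])
  next
    case False
    then show ?thesis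
      using r per[of "r - T + x"] by (simp add: H1_def H2_def indicator_def add.commute[of x r])
  qed
  have H1': "integrable lborel (\<lambda>x. H1 (r + x))"
    and H2': "integrable lborel (\<lambda>x. H2 (r - T + x))"
    using lborel_integrable_real_affine[OF H1, of 1 r] lborel_integrable_real_affine[OF H2, of 1 "r - T"]
    by auto
  show "set_integrable lborel {0..<T} (\<lambda>x. g (x + r))"
    unfolding set_integrable_def wrap using H1' H2' by simp
  have "(LINT x:{0..<T}|lborel. g (x + r))
      = (\<integral>x. H1 (r + x) \<partial>lborel) + (\<integral>x. H2 (r - T + x) \<partial>lborel)"
    unfolding set_lebesgue_integral_def wrap using H1' H2' by simp
  also have "\<dots> = (\<integral>x. H1 x \<partial>lborel) + (\<integral>x. H2 x \<partial>lborel)"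
    using lborel_integral_real_affine[of 1 H1 r] lborel_integral_real_affine[of 1 H2 "r - T"] by simp
  also have "\<dots> = (\<integral>x. H1 x + H2 x \<partial>lborel)" using H1 H2 by simp
  also have "\<dots> = (LINT x:{0..<T}|lborel. g x)"
    unfolding set_lebesgue_integral_def split ..
  finally show "(LINT x:{0..<T}|lborel. g (x + r)) = (LINT x:{0..<T}|lborel. g x)" .
qed

lemma
  fixes g :: "real \<Rightarrow> 'a::{banach, second_countable_topology}"
  assumes per: "\<And>x. g (x + T) = g x" and T: "T > 0"
    and int: "set_integrable lborel {0..T} g"
  shows periodic_set_integrable_shift: "set_integrable lborel {0..T} (\<lambda>x. g (x + s))"
    and periodic_set_integral_shift:
      "(LINT x:{0..T}|lborel. g (x + s)) = (LINT x:{0..T}|lborel. g x)"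
proof -
  define r where "r = T * frac (s / T)"
  have r: "0 \<le> r" "r < T" unfolding r_def using frac_scaled_bounds[OF T] by auto
  have shift: "g (x + s) = g (x + r)" for x
  proof -
    interpret periodic_fun_simple g T by unfold_locales (rule per)
    have "r = s - of_int \<lfloor>s / T\<rfloor> * T"
      using T by (simp add: r_def frac_def right_diff_distrib mult.commute)
    then have "g (x + r) = g (x + s - of_int \<lfloor>s / T\<rfloor> * T)"
      by (simp only: add_diff_eq)
    also have "\<dots> = g (x + s)" by (rule minus_of_int)
    finally show ?thesis ..
  qed
  have g: "g \<in> borel_measurable lborel" by (rule periodic_borel_measurable[OF per T int])
  then have gr: "(\<lambda>x. g (x + r)) \<in> borel_measurable lborel" by measurable
  note Ico = periodic_set_integral_shift_Ico[OF per r int[unfolded set_integrable_Icc_iff_Ico[OF g]]]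
  show "set_integrable lborel {0..T} (\<lambda>x. g (x + s))"
    unfolding shift set_integrable_Icc_iff_Ico[OF gr] by (rule Ico(1))
  show "(LINT x:{0..T}|lborel. g (x + s)) = (LINT x:{0..T}|lborel. g x)"
    unfolding shift set_integral_Icc_eq_Ico[OF gr] set_integral_Icc_eq_Ico[OF g] by (rule Ico(2))
qed

section \<open>Fourier coefficients\<close>

lemma
  fixes F :: "nat \<Rightarrow> 'a \<Rightarrow> 'b::{banach, second_countable_topology}"
  assumes int: "\<And>j. integrable M (F j)"
    and sum: "summable (\<lambda>j. \<integral>x. norm (F j x) \<partial>M)"
  shows AE_summable_norm_if_summable_integral_norm: "AE x in M. summable (\<lambda>j. norm (F j x))"
    and integrable_suminf_if_summable_integral_norm: "integrable M (\<lambda>x. \<Sum>j. F j x)"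
    and integral_suminf_if_summable_integral_norm: "(\<integral>x. (\<Sum>j. F j x) \<partial>M) = (\<Sum>j. integral\<^sup>L M (F j))"
proof -
  have meas [measurable]: "F j \<in> borel_measurable M" for j
    using int by (rule borel_measurable_integrable)
  have "(\<integral>\<^sup>+x. (\<Sum>j. ennreal (norm (F j x))) \<partial>M) = (\<Sum>j. \<integral>\<^sup>+x. ennreal (norm (F j x)) \<partial>M)"
    by (rule nn_integral_suminf) measurable
  also have "\<dots> = (\<Sum>j. ennreal (\<integral>x. norm (F j x) \<partial>M))"
    by (intro suminf_cong nn_integral_eq_integral integrable_norm int) auto
  also have "\<dots> = ennreal (\<Sum>j. \<integral>x. norm (F j x) \<partial>M)"
    by (rule suminf_ennreal2[OF _ sum]) simp
  finally have "(\<integral>\<^sup>+x. (\<Sum>j. ennreal (norm (F j x))) \<partial>M) \<noteq> \<infinity>" by simp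
  then have "AE x in M. (\<Sum>j. ennreal (norm (F j x))) \<noteq> \<infinity>"
    by (rule nn_integral_PInf_AE[rotated]) measurable
  then show AE: "AE x in M. summable (\<lambda>j. norm (F j x))"
    by eventually_elim (rule summable_suminf_not_top, auto)
  show "integrable M (\<lambda>x. \<Sum>j. F j x)" by (rule integrable_suminf[OF int AE sum])
  show "(\<integral>x. (\<Sum>j. F j x) \<partial>M) = (\<Sum>j. integral\<^sup>L M (F j))" by (rule integral_suminf[OF int AE sum])
qed

lemma exp_int_freq_periodic:
  "exp (- \<i> * of_int k * of_real (x + 2*pi)) = exp (- \<i> * of_int k * of_real x)"
proof -
  have "exp (- \<i> * of_int k * of_real (x + 2*pi))
      = exp (- \<i> * of_int k * of_real x) * exp (2 * of_int (-k) * of_real pi * \<i>)"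
    by (simp add: exp_add[symmetric] algebra_simps)
  also have "exp (2 * of_int (-k) * of_real pi * \<i>) = 1"
    using exp_integer_2pi[of "of_int (-k)"] by simp
  finally show ?thesis by simp
qed

lemma norm_exp_int_freq: "norm (exp (- \<i> * of_int k * of_real x)) = 1"
  by (simp add: norm_exp_eq_Re)

lemma in_L_borel_measurable: "in_L f \<Longrightarrow> f \<in> borel_measurable lborel"
  unfolding in_L_def by (intro periodic_borel_measurable[of f "2*pi"]) auto

lemma set_integrable_fourier_integrand:
  assumes "in_L f"
  shows "set_integrable lborel {0..2*pi} (\<lambda>x. f x * exp (- \<i> * of_int k * of_real x))"
  unfolding set_integrable_def
proof (rule Bochner_Integration.integrable_bound)
  show "integrable lborel (\<lambda>x. indicator {0..2*pi} x *\<^sub>R f x)"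
    using assms unfolding in_L_def set_integrable_def by simp
  show "(\<lambda>x. indicator {0..2*pi} x *\<^sub>R (f x * exp (- \<i> * of_int k * of_real x))) \<in> borel_measurable lborel"
    using in_L_borel_measurable[OF assms] by measurable
qed (simp add: norm_mult indicator_def)

lemma
  assumes f: "in_L f"
  shows set_integrable_fourier_integrand_translate:
      "set_integrable lborel {0..2*pi} (\<lambda>x. f (x - s) * exp (- \<i> * of_int k * of_real x))"
    and set_integral_fourier_integrand_translate:
      "(LINT x:{0..2*pi}|lborel. f (x - s) * exp (- \<i> * of_int k * of_real x))
        = exp (- \<i> * of_int k * of_real s) * (LINT x:{0..2*pi}|lborel. f x * exp (- \<i> * of_int k * of_real x))"
proof -
  define G where "G x = f x * exp (- \<i> * of_int k * of_real x)" for x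
  have per: "G (x + 2*pi) = G x" for x
  proof -
    have "f (x + 2*pi) = f x" using f by (simp add: in_L_def)
    then show ?thesis unfolding G_def by (simp only: exp_int_freq_periodic)
  qed
  have int: "set_integrable lborel {0..2*pi} G"
    unfolding G_def by (rule set_integrable_fourier_integrand[OF f])
  have translate: "f (x - s) * exp (- \<i> * of_int k * of_real x)
      = exp (- \<i> * of_int k * of_real s) * G (x + - s)" for x
    by (simp add: G_def exp_add[symmetric] algebra_simps)
  show "set_integrable lborel {0..2*pi} (\<lambda>x. f (x - s) * exp (- \<i> * of_int k * of_real x))"
    unfolding translate by (intro set_integrable_mult_right periodic_set_integrable_shift[OF per _ int]) simp
  show "(LINT x:{0..2*pi}|lborel. f (x - s) * exp (- \<i> * of_int k * of_real x))
      = exp (- \<i> * of_int k * of_real s) * (LINT x:{0..2*pi}|lborel. f x * exp (- \<i> * of_int k * of_real x))"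
    unfolding translate set_integral_mult_right periodic_set_integral_shift[OF per _ int, simplified]
    by (simp add: G_def[abs_def])
qed

lemma set_integral_norm_translate:
  assumes "in_L f"
  shows "(LINT x:{0..2*pi}|lborel. norm (f (x - s))) = (LINT x:{0..2*pi}|lborel. norm (f x))"
proof -
  have per: "norm (f (x + 2*pi)) = norm (f x)" for x using assms by (simp add: in_L_def)
  have "set_integrable lborel {0..2*pi} (\<lambda>x. norm (f x))"
    using assms by (simp add: in_L_def set_integrable_norm)
  from periodic_set_integral_shift[of "\<lambda>x. norm (f x)", OF per _ this, of "- s"]
  show ?thesis by simp
qed

lemma set_integral_translate_series:
  fixes f :: "real \<Rightarrow> complex" and c :: "nat \<Rightarrow> complex" and s :: "nat \<Rightarrow> real"
  assumes f: "in_L f" and c: "summable (\<lambda>j. norm (c j))"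
  shows "(LINT x:{0..2*pi}|lborel. (\<Sum>j. c j * f (x - s j)) * exp (- \<i> * of_int k * of_real x))
       = (\<Sum>j. c j * (LINT x:{0..2*pi}|lborel. f (x - s j) * exp (- \<i> * of_int k * of_real x)))"
proof -
  define S where "S = {0..2*pi}"
  define e where "e x = exp (- \<i> * of_int k * of_real x)" for x
  define F where "F j x = c j * (indicator S x *\<^sub>R (f (x - s j) * e x))" for j x
  have f_meas [measurable]: "f \<in> borel_measurable lborel"
    by (rule in_L_borel_measurable[OF f])
  have int_F: "integrable lborel (F j)" for j
    unfolding F_def using set_integrable_fourier_integrand_translate[OF f, of "s j" k]
    by (intro Bochner_Integration.integrable_mult_right) (simp add: S_def e_def set_integrable_def)
  have norm_F: "norm (F j x) = norm (c j) * (indicator S x *\<^sub>R norm (f (x - s j)))" for j x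
    by (simp add: F_def e_def norm_mult indicator_def norm_exp_int_freq)
  then have integral_norm_F: "(\<integral>x. norm (F j x) \<partial>lborel) = norm (c j) * (LINT x:S|lborel. norm (f x))" for j
    using set_integral_norm_translate[OF f, of "s j"] by (simp add: S_def set_lebesgue_integral_def)
  have sum: "summable (\<lambda>j. \<integral>x. norm (F j x) \<partial>lborel)"
    unfolding integral_norm_F by (rule summable_mult2[OF c])
  note AE_summable = AE_summable_norm_if_summable_integral_norm[OF int_F sum]
  have AE_eq: "AE x in lborel. indicator S x *\<^sub>R ((\<Sum>j. c j * f (x - s j)) * e x) = (\<Sum>j. F j x)"
    using AE_summable
  proof eventually_elim
    case (elim x)
    show ?case
    proof (cases "x \<in> S")
      case True
      then have "summable (\<lambda>j. norm (c j * f (x - s j)))"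
        using elim unfolding norm_F by (simp add: norm_mult)
      then have "summable (\<lambda>j. c j * f (x - s j))" by (rule summable_norm_cancel)
      then have "(\<Sum>j. c j * f (x - s j) * e x) = (\<Sum>j. c j * f (x - s j)) * e x"
        by (rule suminf_mult2[symmetric])
      then show ?thesis using True by (simp add: F_def mult.assoc)
    next
      case False
      then have "F j x = 0" for j by (simp add: F_def)
      with False show ?thesis by simp
    qed
  qed
  have "(LINT x:S|lborel. (\<Sum>j. c j * f (x - s j)) * e x) = (\<integral>x. (\<Sum>j. F j x) \<partial>lborel)"
    unfolding set_lebesgue_integral_def
    using integrable_suminf_if_summable_integral_norm[OF int_F sum]
    by (intro integral_cong_AE[OF _ _ AE_eq]) (auto simp: S_def e_def)
  also have "\<dots> = (\<Sum>j. c j * (LINT x:S|lborel. f (x - s j) * e x))"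
    unfolding integral_suminf_if_summable_integral_norm[OF int_F sum]
    unfolding F_def set_lebesgue_integral_def by (simp only: integral_mult_right_zero)
  finally show ?thesis by (simp add: S_def e_def)
qed

lemma fourier_coeff_translate_series:
  fixes f :: "real \<Rightarrow> complex" and c :: "nat \<Rightarrow> complex" and s :: "nat \<Rightarrow> real"
  assumes f: "in_L f" and c: "summable (\<lambda>j. norm (c j))"
  shows "fourier_coeff (\<lambda>x. \<Sum>j. c j * f (x - s j)) k
       = (\<Sum>j. c j * exp (- \<i> * of_int k * of_real (s j))) * fourier_coeff f k"
proof -
  have "summable (\<lambda>j. c j * exp (- \<i> * of_int k * of_real (s j)))"
    by (rule summable_norm_cancel) (simp add: norm_mult norm_exp_int_freq c)
  then show ?thesis
    unfolding fourier_coeff_def set_integral_translate_series[OF f c]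
      set_integral_fourier_integrand_translate[OF f]
    by (simp add: suminf_mult2 mult.assoc)
qed

lemma fourier_coeff_frac_diff:
  assumes "in_L f" and "\<alpha> > 0"
  shows "fourier_coeff (frac_diff \<alpha> h f) k = frac_diff_symbol \<alpha> (cis (- (of_int k * h))) * fourier_coeff f k"
proof -
  have "fourier_coeff (frac_diff \<alpha> h f) k
      = (\<Sum>j. of_real ((-1)^j * (\<alpha> gchoose j)) * exp (- \<i> * of_int k * of_real (real j * h))) * fourier_coeff f k"
    unfolding frac_diff_def
    by (rule fourier_coeff_translate_series[OF assms(1) summable_norm_frac_diff_coeffs[OF assms(2)]])
  moreover have "exp (- \<i> * of_int k * of_real (real j * h)) = cis (- (of_int k * h)) ^ j" for j
    by (simp add: cis_conv_exp exp_of_nat_mult[symmetric] algebra_simps)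
  ultimately show ?thesis by (simp add: frac_diff_symbol_def)
qed

lemma has_integral_exp_int_freq:
  fixes n :: int
  assumes "n \<noteq> 0"
  shows "((\<lambda>x. exp (\<i> * of_int n * of_real x)) has_integral 0) {0..2*pi}"
proof -
  define F where "F x = exp (\<i> * of_int n * of_real x) / (\<i> * of_int n)" for x :: real
  have "((\<lambda>z. exp (\<i> * of_int n * z) / (\<i> * of_int n)) has_field_derivative exp (\<i> * of_int n * z)) (at z)"
    for z :: complex
    using assms by (auto intro!: derivative_eq_intros)
  then have "(F has_vector_derivative exp (\<i> * of_int n * of_real x)) (at x within {0..2*pi})" for x
    unfolding F_def by (rule has_vector_derivative_real_field)
  then have "((\<lambda>x. exp (\<i> * of_int n * of_real x)) has_integral (F (2*pi) - F 0)) {0..2*pi}"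
    by (intro fundamental_theorem_of_calculus) auto
  moreover have "exp (\<i> * of_int n * of_real (2*pi)) = 1"
    using exp_integer_2pi[of "of_int n"] by (simp add: mult_ac)
  ultimately show ?thesis by (simp add: F_def)
qed

lemma zero_in_trig_polys: "(\<lambda>x. 0) \<in> trig_polys m"
  unfolding trig_polys_def by (auto intro!: exI[of _ "\<lambda>_. 0"])

lemma set_integrable_trig_poly_integrand:
  assumes "t \<in> trig_polys m"
  shows "set_integrable lborel {0..2*pi} (\<lambda>x. t x * exp (- \<i> * of_int k * of_real x))"
  using assms unfolding trig_polys_def
  by (auto intro!: borel_integrable_atLeastAtMost' continuous_intros)

lemma fourier_coeff_trig_poly_eq_0:
  assumes t: "t \<in> trig_polys m" and k: "k \<notin> {-m..m}"
  shows "fourier_coeff t k = 0"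
proof -
  obtain c where t_eq: "t = (\<lambda>x. \<Sum>l\<in>{-m..m}. c l * exp (\<i> * of_int l * of_real x))"
    using t unfolding trig_polys_def by blast
  have integrand: "t x * exp (- \<i> * of_int k * of_real x)
      = (\<Sum>l\<in>{-m..m}. c l * exp (\<i> * of_int (l - k) * of_real x))" for x
    unfolding t_eq sum_distrib_right by (simp add: mult.assoc exp_add[symmetric] algebra_simps)
  have "((\<lambda>x. t x * exp (- \<i> * of_int k * of_real x)) has_integral (\<Sum>l\<in>{-m..m}. c l * 0)) {0..2*pi}"
    unfolding integrand using k
    by (intro has_integral_sum has_integral_mult_right has_integral_exp_int_freq) auto
  then have "integral {0..2*pi} (\<lambda>x. t x * exp (- \<i> * of_int k * of_real x)) = 0"
    by (simp add: integral_unique)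
  then show ?thesis
    using set_borel_integral_eq_integral(2)[OF set_integrable_trig_poly_integrand[OF t, of k]]
    by (simp add: fourier_coeff_def)
qed

lemma fourier_coeff_diff_trig_poly:
  assumes "in_L f" and "t \<in> trig_polys m"
  shows "fourier_coeff (\<lambda>x. f x - t x) k = fourier_coeff f k - fourier_coeff t k"
  using set_integral_diff(2)[OF set_integrable_fourier_integrand[OF assms(1)]
      set_integrable_trig_poly_integrand[OF assms(2)], of k]
  by (simp add: fourier_coeff_def left_diff_distrib diff_divide_distrib)

section \<open>Orlicz sequence norms\<close>

lemma orlicz_fn_nonneg: "orlicz_fn M \<Longrightarrow> 0 \<le> u \<Longrightarrow> 0 \<le> M u"
  unfolding orlicz_fn_def by (metis atLeast_iff mono_onD order_refl)

lemma orlicz_fn_mono: "orlicz_fn M \<Longrightarrow> 0 \<le> u \<Longrightarrow> u \<le> v \<Longrightarrow> M u \<le> M v"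
  unfolding orlicz_fn_def by (metis atLeast_iff mono_onD order_trans)

lemma orlicz_fn_convex:
  "orlicz_fn M \<Longrightarrow> 0 \<le> u \<Longrightarrow> 0 \<le> v \<Longrightarrow> 0 \<le> t \<Longrightarrow> t \<le> 1 \<Longrightarrow>
    M ((1 - t) * u + t * v) \<le> (1 - t) * M u + t * M v"
  unfolding orlicz_fn_def using convex_onD[of "{0..}" M t u v] by auto

lemma orlicz_fn_scale_le: "orlicz_fn M \<Longrightarrow> 0 \<le> u \<Longrightarrow> 0 \<le> t \<Longrightarrow> t \<le> 1 \<Longrightarrow> M (t * u) \<le> t * M u"
  using orlicz_fn_convex[of M 0 u t] by (simp add: orlicz_fn_def)

locale orlicz_sequence =
  fixes Ms :: "int \<Rightarrow> real \<Rightarrow> real"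
  assumes orlicz_fn: "orlicz_fn (Ms k)"
begin

(* All norm estimates are
   stated for such sequences only: elsewhere lux_norm is Inf {} and orlicz_norm the Sup of an
   unbounded set, both junk values. *)
abbreviation has_lux_norm :: "(int \<Rightarrow> complex) \<Rightarrow> bool" where
  "has_lux_norm c \<equiv> lux_set Ms c \<noteq> {}"

lemma lux_set_pos: "a \<in> lux_set Ms c \<Longrightarrow> a > 0"
  unfolding lux_set_def by auto

lemma lux_set_dominated:
  assumes a: "a \<in> lux_set Ms d" and b: "b > 0" and le: "\<And>k. cmod (c k) / b \<le> cmod (d k) / a"
  shows "b \<in> lux_set Ms c"
proof -
  from a have sum: "(\<lambda>k. Ms k (cmod (d k) / a)) summable_on UNIV"
    and le_1: "(\<Sum>\<^sub>\<infinity>k. Ms k (cmod (d k) / a)) \<le> 1" unfolding lux_set_def by auto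
  have le': "Ms k (cmod (c k) / b) \<le> Ms k (cmod (d k) / a)" for k
    using orlicz_fn_mono[OF orlicz_fn _ le] b by simp
  have "(\<lambda>k. Ms k (cmod (c k) / b)) summable_on UNIV"
    using orlicz_fn_nonneg[OF orlicz_fn] b le'
    by (intro summable_on_comparison_test[OF sum]) auto
  moreover from this have "(\<Sum>\<^sub>\<infinity>k. Ms k (cmod (c k) / b)) \<le> 1"
    using infsum_mono[OF _ sum le'] le_1 by linarith
  ultimately show ?thesis using b unfolding lux_set_def by auto
qed

lemma lux_set_add:
  assumes a: "a \<in> lux_set Ms c" and b: "b \<in> lux_set Ms d"
  shows "a + b \<in> lux_set Ms (\<lambda>k. c k + d k)"
proof -
  from a have a0: "a > 0" and sum_a: "(\<lambda>k. Ms k (cmod (c k) / a)) summable_on UNIV"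
    and le_a: "(\<Sum>\<^sub>\<infinity>k. Ms k (cmod (c k) / a)) \<le> 1" unfolding lux_set_def by auto
  from b have b0: "b > 0" and sum_b: "(\<lambda>k. Ms k (cmod (d k) / b)) summable_on UNIV"
    and le_b: "(\<Sum>\<^sub>\<infinity>k. Ms k (cmod (d k) / b)) \<le> 1" unfolding lux_set_def by auto
  define t where "t = b / (a + b)"
  have t: "0 \<le> t" "t \<le> 1" "1 - t = a / (a + b)" using a0 b0 by (auto simp: t_def field_simps)
  define G where "G k = (1 - t) * Ms k (cmod (c k) / a) + t * Ms k (cmod (d k) / b)" for k
  \<comment> \<open>\<open>|c + d| / (a + b)\<close> is a convex combination of \<open>|c| / a\<close> and \<open>|d| / b\<close>.\<close>
  have le: "Ms k (cmod (c k + d k) / (a + b)) \<le> G k" for k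
  proof -
    have "cmod (c k + d k) / (a + b) \<le> (cmod (c k) + cmod (d k)) / (a + b)"
      using a0 b0 norm_triangle_ineq[of "c k" "d k"] by (simp add: divide_right_mono)
    also have "\<dots> = a / (a + b) * (cmod (c k) / a) + b / (a + b) * (cmod (d k) / b)"
      using a0 b0 by (simp add: add_divide_distrib)
    also have "\<dots> = (1 - t) * (cmod (c k) / a) + t * (cmod (d k) / b)"
      unfolding t(3) unfolding t_def ..
    finally have "Ms k (cmod (c k + d k) / (a + b)) \<le> Ms k ((1 - t) * (cmod (c k) / a) + t * (cmod (d k) / b))"
      using orlicz_fn_mono[OF orlicz_fn] a0 b0 by simp
    also have "\<dots> \<le> G k"
      unfolding G_def using a0 b0 t by (intro orlicz_fn_convex[OF orlicz_fn]) auto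
    finally show ?thesis .
  qed
  have sum_G: "G summable_on UNIV"
    unfolding G_def by (intro summable_on_add summable_on_cmult_right sum_a sum_b)
  have sum: "(\<lambda>k. Ms k (cmod (c k + d k) / (a + b))) summable_on UNIV"
    using orlicz_fn_nonneg[OF orlicz_fn] a0 b0 le
    by (intro summable_on_comparison_test[OF sum_G]) auto
  have "(\<Sum>\<^sub>\<infinity>k. Ms k (cmod (c k + d k) / (a + b))) \<le> (\<Sum>\<^sub>\<infinity>k. G k)"
    by (rule infsum_mono[OF sum sum_G le])
  also have "\<dots> = (1 - t) * (\<Sum>\<^sub>\<infinity>k. Ms k (cmod (c k) / a)) + t * (\<Sum>\<^sub>\<infinity>k. Ms k (cmod (d k) / b))"
    unfolding G_def by (simp add: infsum_add summable_on_cmult_right sum_a sum_b infsum_cmult_right)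
  also have "\<dots> \<le> (1 - t) * 1 + t * 1"
    using le_a le_b t by (intro add_mono mult_left_mono) auto
  finally show ?thesis using sum a0 b0 unfolding lux_set_def by auto
qed

lemma has_lux_norm_finite_support:
  assumes fin: "finite K" and supp: "\<And>k. k \<notin> K \<Longrightarrow> c k = 0"
  shows "has_lux_norm c"
proof -
  define B where "B = 1 + (\<Sum>k\<in>K. cmod (c k) * (1 + Ms k 1))"
  have M1: "0 \<le> Ms k 1" for k using orlicz_fn_nonneg[OF orlicz_fn] by simp
  have M0: "Ms k 0 = 0" for k using orlicz_fn by (simp add: orlicz_fn_def)
  have B: "B \<ge> 1" unfolding B_def using M1 by (simp add: sum_nonneg)
  have small: "cmod (c k) / B \<le> 1" if "k \<in> K" for k
  proof -
    have "cmod (c k) \<le> cmod (c k) * (1 + Ms k 1)" using M1[of k] by (simp add: algebra_simps)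
    also have "\<dots> \<le> (\<Sum>k\<in>K. cmod (c k) * (1 + Ms k 1))"
      using that fin M1 by (intro member_le_sum) auto
    finally show ?thesis using B by (simp add: B_def)
  qed
  \<comment> \<open>Below \<open>1\<close> each \<open>Ms k\<close> lies under its chord, \<open>Ms k u \<le> u Ms k 1\<close>.\<close>
  have "(\<Sum>\<^sub>\<infinity>k. Ms k (cmod (c k) / B)) = (\<Sum>\<^sub>\<infinity>k\<in>K. Ms k (cmod (c k) / B))"
    by (rule infsum_cong_neutral) (use supp M0 in auto)
  also have "\<dots> = (\<Sum>k\<in>K. Ms k (cmod (c k) / B))"
    using fin by simp
  also have "\<dots> \<le> (\<Sum>k\<in>K. cmod (c k) / B * Ms k 1)"
    using small B by (intro sum_mono orlicz_fn_scale_le[OF orlicz_fn, of 1, simplified]) auto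
  also have "\<dots> = (\<Sum>k\<in>K. cmod (c k) * Ms k 1) / B" by (simp add: sum_divide_distrib)
  also have "\<dots> \<le> 1"
  proof -
    have "(\<Sum>k\<in>K. cmod (c k) * Ms k 1) \<le> (\<Sum>k\<in>K. cmod (c k) * (1 + Ms k 1))"
      by (intro sum_mono mult_left_mono) auto
    then show ?thesis using B by (simp add: B_def)
  qed
  finally have "(\<Sum>\<^sub>\<infinity>k. Ms k (cmod (c k) / B)) \<le> 1" .
  moreover have "(\<lambda>k. Ms k (cmod (c k) / B)) summable_on UNIV"
    using supp M0 fin by (subst summable_on_cong_neutral[where T = K]) auto
  ultimately have "B \<in> lux_set Ms c" using B unfolding lux_set_def by auto
  then show ?thesis by blast
qed

lemma lux_norm_nonneg: "has_lux_norm c \<Longrightarrow> 0 \<le> lux_norm Ms c"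
  unfolding lux_norm_def by (rule cInf_greatest) (auto dest: lux_set_pos intro: less_imp_le)

lemma lux_norm_le: "a \<in> lux_set Ms c \<Longrightarrow> lux_norm Ms c \<le> a"
  unfolding lux_norm_def
  by (rule cInf_lower) (auto intro!: bdd_belowI[of _ 0] dest: lux_set_pos intro: less_imp_le)

lemma
  assumes d: "has_lux_norm d" and r: "r \<ge> 0" and le: "\<And>k. cmod (c k) \<le> r * cmod (d k)"
  shows has_lux_norm_dominated: "has_lux_norm c"
    and lux_norm_dominated: "lux_norm Ms c \<le> r * lux_norm Ms d"
proof -
  have mem: "r * a + e \<in> lux_set Ms c" if a: "a \<in> lux_set Ms d" and e: "e > 0" for a e
  proof (rule lux_set_dominated[OF a])
    have a0: "a > 0" using lux_set_pos[OF a] .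
    show "r * a + e > 0" using a0 r e by (simp add: add_nonneg_pos)
    fix k
    have "cmod (c k) * a \<le> r * cmod (d k) * a" using le[of k] a0 by (simp add: mult_right_mono)
    also have "\<dots> \<le> cmod (d k) * (r * a + e)" using e by (simp add: algebra_simps)
    finally have "cmod (c k) * a \<le> cmod (d k) * (r * a + e)" .
    then show "cmod (c k) / (r * a + e) \<le> cmod (d k) / a"
      using a0 \<open>r * a + e > 0\<close> by (simp add: divide_simps)
  qed
  show "has_lux_norm c" using d mem[of _ 1] by auto
  have le_a: "lux_norm Ms c \<le> r * a" if a: "a \<in> lux_set Ms d" for a
  proof (rule field_le_epsilon)
    fix e :: real assume "e > 0"
    then show "lux_norm Ms c \<le> r * a + e" by (rule lux_norm_le[OF mem[OF a]])
  qed
  show "lux_norm Ms c \<le> r * lux_norm Ms d"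
  proof (cases "r = 0")
    case True
    from d obtain a where "a \<in> lux_set Ms d" by blast
    then show ?thesis using le_a True by simp
  next
    case False
    then have r0: "r > 0" using r by simp
    have "lux_norm Ms c / r \<le> a" if "a \<in> lux_set Ms d" for a
      using le_a[OF that] r0 by (simp add: pos_divide_le_eq algebra_simps)
    then have "lux_norm Ms c / r \<le> lux_norm Ms d"
      unfolding lux_norm_def[of Ms d] by (rule cInf_greatest[OF d])
    then show ?thesis using r0 by (simp add: pos_divide_le_eq algebra_simps)
  qed
qed

lemma
  assumes c: "has_lux_norm c" and d: "has_lux_norm d"
  shows has_lux_norm_add: "has_lux_norm (\<lambda>k. c k + d k)"
    and lux_norm_add_le: "lux_norm Ms (\<lambda>k. c k + d k) \<le> lux_norm Ms c + lux_norm Ms d"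
proof -
  show "has_lux_norm (\<lambda>k. c k + d k)" using c d lux_set_add by blast
  have "lux_norm Ms (\<lambda>k. c k + d k) - b \<le> lux_norm Ms c" if b: "b \<in> lux_set Ms d" for b
    unfolding lux_norm_def[of Ms c] using lux_norm_le[OF lux_set_add[OF _ b]]
    by (intro cInf_greatest[OF c]) force
  then have "lux_norm Ms (\<lambda>k. c k + d k) - lux_norm Ms c \<le> lux_norm Ms d"
    unfolding lux_norm_def[of Ms d] by (intro cInf_greatest[OF d]) (force simp: lux_norm_def)
  then show "lux_norm Ms (\<lambda>k. c k + d k) \<le> lux_norm Ms c + lux_norm Ms d" by simp
qed

lemma zero_in_Lambda_set: "(\<lambda>k. 0) \<in> Lambda_set Ms"
proof -
  have "conj_fn (Ms k) 0 = 0" for k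
    unfolding conj_fn_def using orlicz_fn_nonneg[OF orlicz_fn] orlicz_fn[of k]
    by (intro cSup_eq_maximum) (auto simp: orlicz_fn_def image_iff intro: bexI[of _ 0])
  moreover have "bdd_above ((\<lambda>u. u * 0 - Ms k u) ` {0..})" for k
    using orlicz_fn_nonneg[OF orlicz_fn] by (intro bdd_aboveI[of _ 0]) auto
  ultimately show ?thesis unfolding Lambda_set_def by simp
qed

lemma Lambda_set_nonneg: "lam \<in> Lambda_set Ms \<Longrightarrow> 0 \<le> lam k"
  by (simp add: Lambda_set_def)

lemma Lambda_set_Young:
  assumes "lam \<in> Lambda_set Ms" and "0 \<le> u"
  shows "u * lam k \<le> Ms k u + conj_fn (Ms k) (lam k)"
proof -
  have "u * lam k - Ms k u \<le> conj_fn (Ms k) (lam k)"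
    unfolding conj_fn_def using assms by (intro cSup_upper) (auto simp: Lambda_set_def)
  then show ?thesis by simp
qed

lemma
  assumes a: "a \<in> lux_set Ms c" and lam: "lam \<in> Lambda_set Ms"
  shows summable_on_Lambda_pairing: "(\<lambda>k. lam k * cmod (c k)) summable_on UNIV"
    and Lambda_pairing_le: "(\<Sum>\<^sub>\<infinity>k. lam k * cmod (c k)) \<le> 2 * a"
proof -
  from a have a0: "a > 0" and sum_a: "(\<lambda>k. Ms k (cmod (c k) / a)) summable_on UNIV"
    and le_a: "(\<Sum>\<^sub>\<infinity>k. Ms k (cmod (c k) / a)) \<le> 1" unfolding lux_set_def by auto
  from lam have sum_l: "(\<lambda>k. conj_fn (Ms k) (lam k)) summable_on UNIV"
    and le_l: "(\<Sum>\<^sub>\<infinity>k. conj_fn (Ms k) (lam k)) \<le> 1" unfolding Lambda_set_def by auto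
  define G where "G k = a * (Ms k (cmod (c k) / a) + conj_fn (Ms k) (lam k))" for k
  have le: "lam k * cmod (c k) \<le> G k" for k
    using mult_left_mono[OF Lambda_set_Young[OF lam, of "cmod (c k) / a" k], of a] a0
    by (simp add: G_def algebra_simps)
  have sum_G: "G summable_on UNIV"
    unfolding G_def by (intro summable_on_cmult_right summable_on_add sum_a sum_l)
  show sum: "(\<lambda>k. lam k * cmod (c k)) summable_on UNIV"
    using le Lambda_set_nonneg[OF lam] by (intro summable_on_comparison_test[OF sum_G]) auto
  have "(\<Sum>\<^sub>\<infinity>k. lam k * cmod (c k)) \<le> (\<Sum>\<^sub>\<infinity>k. G k)"
    by (rule infsum_mono[OF sum sum_G le])
  also have "\<dots> = a * ((\<Sum>\<^sub>\<infinity>k. Ms k (cmod (c k) / a)) + (\<Sum>\<^sub>\<infinity>k. conj_fn (Ms k) (lam k)))"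
    unfolding G_def by (simp add: infsum_cmult_right summable_on_add sum_a sum_l infsum_add)
  also have "\<dots> \<le> a * (1 + 1)" using le_a le_l a0 by (intro mult_left_mono add_mono) auto
  finally show "(\<Sum>\<^sub>\<infinity>k. lam k * cmod (c k)) \<le> 2 * a" by simp
qed

lemma orlicz_norm_upper:
  assumes c: "has_lux_norm c" and lam: "lam \<in> Lambda_set Ms"
  shows "(\<Sum>\<^sub>\<infinity>k. lam k * cmod (c k)) \<le> orlicz_norm Ms c"
proof -
  from c obtain a where "a \<in> lux_set Ms c" by blast
  then have "bdd_above ((\<lambda>lam. \<Sum>\<^sub>\<infinity>k. lam k * cmod (c k)) ` Lambda_set Ms)"
    using Lambda_pairing_le by (intro bdd_aboveI[of _ "2 * a"]) auto
  then show ?thesis unfolding orlicz_norm_def using lam by (intro cSup_upper) auto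
qed

lemma orlicz_norm_nonneg: "has_lux_norm c \<Longrightarrow> 0 \<le> orlicz_norm Ms c"
  using orlicz_norm_upper[OF _ zero_in_Lambda_set] by simp

lemma orlicz_norm_dominated:
  assumes d: "has_lux_norm d" and r: "r \<ge> 0" and le: "\<And>k. cmod (c k) \<le> r * cmod (d k)"
  shows "orlicz_norm Ms c \<le> r * orlicz_norm Ms d"
  unfolding orlicz_norm_def[of Ms c]
proof (rule cSup_least)
  show "(\<lambda>lam. \<Sum>\<^sub>\<infinity>k. lam k * cmod (c k)) ` Lambda_set Ms \<noteq> {}"
    using zero_in_Lambda_set by blast
  fix x assume "x \<in> (\<lambda>lam. \<Sum>\<^sub>\<infinity>k. lam k * cmod (c k)) ` Lambda_set Ms"
  then obtain lam where lam: "lam \<in> Lambda_set Ms" and x: "x = (\<Sum>\<^sub>\<infinity>k. lam k * cmod (c k))"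
    by blast
  obtain a b where a: "a \<in> lux_set Ms c" and b: "b \<in> lux_set Ms d"
    using has_lux_norm_dominated[OF d r le] d by blast
  have "lam k * cmod (c k) \<le> r * (lam k * cmod (d k))" for k
    using mult_left_mono[OF le[of k] Lambda_set_nonneg[OF lam]] by (simp add: algebra_simps)
  then have "x \<le> (\<Sum>\<^sub>\<infinity>k. r * (lam k * cmod (d k)))"
    unfolding x using summable_on_Lambda_pairing[OF a lam] summable_on_Lambda_pairing[OF b lam]
    by (intro infsum_mono summable_on_cmult_right) auto
  also have "\<dots> = r * (\<Sum>\<^sub>\<infinity>k. lam k * cmod (d k))"
    by (rule infsum_cmult_right) (rule summable_on_Lambda_pairing[OF b lam])
  also have "\<dots> \<le> r * orlicz_norm Ms d"
    using orlicz_norm_upper[OF d lam] r by (rule mult_left_mono)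
  finally show "x \<le> r * orlicz_norm Ms d" .
qed

lemma orlicz_norm_add_le:
  assumes c: "has_lux_norm c" and d: "has_lux_norm d"
  shows "orlicz_norm Ms (\<lambda>k. c k + d k) \<le> orlicz_norm Ms c + orlicz_norm Ms d"
  unfolding orlicz_norm_def[of Ms "\<lambda>k. c k + d k"]
proof (rule cSup_least)
  show "(\<lambda>lam. \<Sum>\<^sub>\<infinity>k. lam k * cmod (c k + d k)) ` Lambda_set Ms \<noteq> {}"
    using zero_in_Lambda_set by blast
  fix x assume "x \<in> (\<lambda>lam. \<Sum>\<^sub>\<infinity>k. lam k * cmod (c k + d k)) ` Lambda_set Ms"
  then obtain lam where lam: "lam \<in> Lambda_set Ms" and x: "x = (\<Sum>\<^sub>\<infinity>k. lam k * cmod (c k + d k))"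
    by blast
  obtain a b ab where a: "a \<in> lux_set Ms c" and b: "b \<in> lux_set Ms d"
    and ab: "ab \<in> lux_set Ms (\<lambda>k. c k + d k)"
    using c d has_lux_norm_add[OF c d] by blast
  note sum_c = summable_on_Lambda_pairing[OF a lam] and sum_d = summable_on_Lambda_pairing[OF b lam]
  have "lam k * cmod (c k + d k) \<le> lam k * cmod (c k) + lam k * cmod (d k)" for k
    using mult_left_mono[OF norm_triangle_ineq[of "c k" "d k"] Lambda_set_nonneg[OF lam]]
    by (simp add: distrib_left)
  then have "x \<le> (\<Sum>\<^sub>\<infinity>k. lam k * cmod (c k) + lam k * cmod (d k))"
    unfolding x using summable_on_Lambda_pairing[OF ab lam] sum_c sum_d
    by (intro infsum_mono summable_on_add) auto
  also have "\<dots> = (\<Sum>\<^sub>\<infinity>k. lam k * cmod (c k)) + (\<Sum>\<^sub>\<infinity>k. lam k * cmod (d k))"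
    by (rule infsum_add[OF sum_c sum_d])
  also have "\<dots> \<le> orlicz_norm Ms c + orlicz_norm Ms d"
    using orlicz_norm_upper[OF c lam] orlicz_norm_upper[OF d lam] by (rule add_mono)
  finally show "x \<le> orlicz_norm Ms c + orlicz_norm Ms d" .
qed

end

locale orlicz_space_norm = orlicz_sequence +
  fixes N :: "(int \<Rightarrow> complex) \<Rightarrow> real"
  assumes lux_or_orlicz: "N = lux_norm Ms \<or> N = orlicz_norm Ms"
begin

lemma N_nonneg: "has_lux_norm c \<Longrightarrow> 0 \<le> N c"
  using lux_or_orlicz lux_norm_nonneg orlicz_norm_nonneg by auto

lemma N_dominated:
  assumes "has_lux_norm d" "r \<ge> 0" "\<And>k. cmod (c k) \<le> r * cmod (d k)"
  shows "N c \<le> r * N d"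
  using lux_or_orlicz lux_norm_dominated[OF assms] orlicz_norm_dominated[OF assms] by auto

lemma N_add_le:
  assumes "has_lux_norm c" "has_lux_norm d"
  shows "N (\<lambda>k. c k + d k) \<le> N c + N d"
  using lux_or_orlicz lux_norm_add_le[OF assms] orlicz_norm_add_le[OF assms] by auto

lemma N_le_weighted_sum:
  assumes fin: "finite I" and d: "\<And>i. i \<in> I \<Longrightarrow> has_lux_norm (d i)"
    and r: "\<And>i. i \<in> I \<Longrightarrow> r i \<ge> 0"
    and le: "\<And>k. cmod (c k) \<le> (\<Sum>i\<in>I. r i * cmod (d i k))"
  shows "has_lux_norm c" and "N c \<le> (\<Sum>i\<in>I. r i * N (d i))"
proof -
  define D where "D J k = complex_of_real (\<Sum>i\<in>J. r i * cmod (d i k))" for J k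
  have D: "has_lux_norm (D J) \<and> N (D J) \<le> (\<Sum>i\<in>J. r i * N (d i))" if "J \<subseteq> I" for J
    using finite_subset[OF that fin] that
  proof (induction J rule: finite_induct)
    case empty
    have "has_lux_norm (\<lambda>k. 0)" by (rule has_lux_norm_finite_support[of "{}"]) auto
    moreover from this have "N (\<lambda>k. 0) \<le> 0 * N (\<lambda>k. 0)" by (rule N_dominated) auto
    ultimately show ?case by (simp add: D_def)
  next
    case (insert i J)
    define T where "T k = complex_of_real (r i * cmod (d i k))" for k
    have ri: "r i \<ge> 0" and di: "has_lux_norm (d i)" using insert r d by auto
    have T: "cmod (T k) \<le> r i * cmod (d i k)" for k using ri by (simp add: T_def norm_mult)
    have IH: "has_lux_norm (D J)" "N (D J) \<le> (\<Sum>i\<in>J. r i * N (d i))" using insert by auto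
    have "D (insert i J) = (\<lambda>k. T k + D J k)"
      using insert by (simp add: D_def T_def fun_eq_iff)
    then show ?case
      using has_lux_norm_add[OF has_lux_norm_dominated[OF di ri T] IH(1)]
        N_add_le[OF has_lux_norm_dominated[OF di ri T] IH(1)] N_dominated[OF di ri T] IH(2) insert
      by simp
  qed
  have "cmod (D I k) = (\<Sum>i\<in>I. r i * cmod (d i k))" for k
    unfolding D_def norm_of_real using r by (simp add: sum_nonneg)
  then have le': "cmod (c k) \<le> 1 * cmod (D I k)" for k
    using le[of k] by simp
  show "has_lux_norm c" using has_lux_norm_dominated[OF conjunct1[OF D] _ le'] by simp
  show "N c \<le> (\<Sum>i\<in>I. r i * N (d i))" using N_dominated[OF conjunct1[OF D] _ le'] D by force
qed

end

section \<open>Dyadic bounds\<close>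

definition coeff_tail :: "nat \<Rightarrow> (int \<Rightarrow> complex) \<Rightarrow> int \<Rightarrow> complex" where
  "coeff_tail n c k = (if int n \<le> \<bar>k\<bar> then c k else 0)"

lemma exists_dyadic_block:
  fixes K :: int
  assumes "1 \<le> K" "K < 2^n"
  shows "\<exists>m<n. 2^m \<le> K \<and> K < 2^(m+1)"
  using assms
proof (induction n)
  case (Suc n)
  then show ?case
    by (cases "K < 2^n") (auto intro: less_SucI)
qed simp

lemma bigo_powr_imp_uniform_bound:
  fixes g :: "nat \<Rightarrow> real"
  assumes O: "g \<in> O(\<lambda>n. real n powr - \<beta>)" and \<beta>: "\<beta> \<ge> 0" and B: "\<And>n. g n \<le> B"
  shows "\<exists>K\<ge>0. \<forall>n\<ge>1. g n \<le> K * real n powr - \<beta>"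
proof -
  obtain c where c: "c > 0" "eventually (\<lambda>n. norm (g n) \<le> c * norm (real n powr - \<beta>)) at_top"
    using landau_o.bigE[OF O] by blast
  then obtain n0 where n0: "\<And>n. n \<ge> n0 \<Longrightarrow> g n \<le> c * real n powr - \<beta>"
    unfolding eventually_at_top_linorder by force
  define K where "K = c + max B 0 * real n0 powr \<beta>"
  \<comment> \<open>The finitely many \<open>n < n0\<close> are covered by \<open>B \<le> B (n0 / n) ^ \<beta>\<close>.\<close>
  have "g n \<le> K * real n powr - \<beta>" if n: "n \<ge> 1" for n
  proof (cases "n \<ge> n0")
    case True
    then show ?thesis using n0[OF True] \<beta> by (simp add: K_def distrib_right add_increasing2)
  next
    case False
    have "g n \<le> max B 0 * (real n powr \<beta> * real n powr - \<beta>)"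
      using B[of n] n by (simp add: powr_add[symmetric])
    also have "\<dots> \<le> max B 0 * (real n0 powr \<beta> * real n powr - \<beta>)"
      using False \<beta> by (intro mult_left_mono mult_right_mono powr_mono2) auto
    also have "\<dots> \<le> K * real n powr - \<beta>"
      using c(1) by (simp add: K_def algebra_simps)
    finally show ?thesis .
  qed
  moreover have "K \<ge> 0" using c(1) by (simp add: K_def)
  ultimately show ?thesis by blast
qed

definition dyadic_index :: "real \<Rightarrow> nat" where
  "dyadic_index t = (LEAST n. 1 \<le> 2^n * t)"

lemma dyadic_index:
  fixes t :: real
  assumes t: "0 < t" "t < 1"
  shows "1 \<le> dyadic_index t" and "1 \<le> 2 ^ dyadic_index t * t" and "2 ^ dyadic_index t * t < 2"
proof -
  obtain n0 :: nat where "1 / t < 2 ^ n0" using real_arch_pow[of 2 "1 / t"] by auto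
  then have "1 \<le> 2 ^ n0 * t" using t by (simp add: field_simps)
  then show le: "1 \<le> 2 ^ dyadic_index t * t"
    unfolding dyadic_index_def by (rule LeastI)
  then show pos: "1 \<le> dyadic_index t"
    using t by (cases "dyadic_index t") auto
  have "\<not> 1 \<le> 2 ^ (dyadic_index t - 1) * t"
    using pos unfolding dyadic_index_def by (intro not_less_Least) auto
  then show "2 ^ dyadic_index t * t < 2"
    using pos by (cases "dyadic_index t") auto
qed

(* omega_alpha(f, t) / (K 2^alpha) <= t^beta + t^alpha sum_(m<n) 2^((alpha - beta) m),
   with n chosen by 1 <= 2^n t < 2. *)
definition dyadic_majorant :: "real \<Rightarrow> real \<Rightarrow> real \<Rightarrow> real" where
  "dyadic_majorant \<alpha> \<beta> t = t powr \<beta> + t powr \<alpha> * (\<Sum>m<dyadic_index t. (2 powr (\<alpha> - \<beta>))^m)"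

lemma dyadic_majorant_nonneg: "0 \<le> dyadic_majorant \<alpha> \<beta> t"
  unfolding dyadic_majorant_def by (intro add_nonneg_nonneg mult_nonneg_nonneg sum_nonneg) auto

lemma dyadic_majorant_bigo_lt:
  assumes "\<beta> < \<alpha>"
  shows "dyadic_majorant \<alpha> \<beta> \<in> O[at_right 0](\<lambda>t. t powr \<beta>)"
proof (rule bigoI)
  define q where "q = 2 powr (\<alpha> - \<beta>)"
  have q: "q > 1" unfolding q_def using assms by simp
  have "dyadic_majorant \<alpha> \<beta> t \<le> (1 + q / (q - 1)) * t powr \<beta>" if t: "0 < t" "t < 1" for t
  proof -
    define n where "n = dyadic_index t"
    \<comment> \<open>The geometric sum is dominated by its last term \<open>q^n \<approx> t^(\<beta> - \<alpha>)\<close>.\<close>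
    have "(\<Sum>m<n. q^m) \<le> q^n / (q - 1)"
      using q by (simp add: sum_gp_strict field_simps)
    also have "q^n = ((2::real)^n) powr (\<alpha> - \<beta>)"
      by (simp add: q_def powr_realpow[symmetric] powr_powr powr_power mult.commute)
    also have "\<dots> \<le> (2 / t) powr (\<alpha> - \<beta>)"
      using dyadic_index(3)[OF t] t assms by (intro powr_mono2) (auto simp: n_def field_simps)
    also have "\<dots> = q / t powr (\<alpha> - \<beta>)"
      using t by (simp add: q_def powr_divide)
    finally have "t powr \<alpha> * (\<Sum>m<n. q^m) \<le> t powr \<alpha> * (q / t powr (\<alpha> - \<beta>) / (q - 1))"
      using q by (intro mult_left_mono) (auto simp: divide_right_mono)
    also have "\<dots> = q / (q - 1) * (t powr \<alpha> / t powr (\<alpha> - \<beta>))"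
      by (simp add: divide_inverse mult_ac)
    also have "t powr \<alpha> / t powr (\<alpha> - \<beta>) = t powr \<beta>"
      using t by (simp add: powr_diff)
    finally show ?thesis by (simp add: dyadic_majorant_def q_def n_def algebra_simps)
  qed
  then show "eventually (\<lambda>t. norm (dyadic_majorant \<alpha> \<beta> t) \<le> (1 + q / (q - 1)) * norm (t powr \<beta>)) (at_right 0)"
    using eventually_at_right_real[of 0 "1::real"]
    by (auto elim!: eventually_mono simp: dyadic_majorant_nonneg)
qed

lemma dyadic_majorant_bigo_gt:
  assumes "\<alpha> < \<beta>"
  shows "dyadic_majorant \<alpha> \<beta> \<in> O[at_right 0](\<lambda>t. t powr \<alpha>)"
proof (rule bigoI)
  define q where "q = 2 powr (\<alpha> - \<beta>)"
  have q: "0 < q" "q < 1" unfolding q_def using powr_less_mono[of "\<alpha> - \<beta>" 0 2] assms by simp_all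
  have "dyadic_majorant \<alpha> \<beta> t \<le> (1 + 1 / (1 - q)) * t powr \<alpha>" if t: "0 < t" "t < 1" for t
  proof -
    have "(\<Sum>m<dyadic_index t. q^m) \<le> 1 / (1 - q)"
      using q by (simp add: sum_gp_strict divide_right_mono)
    moreover have "t powr \<beta> \<le> t powr \<alpha>"
      using assms t by (intro powr_mono') auto
    ultimately show ?thesis
      using mult_left_mono[of _ _ "t powr \<alpha>"] by (fastforce simp: dyadic_majorant_def q_def algebra_simps)
  qed
  then show "eventually (\<lambda>t. norm (dyadic_majorant \<alpha> \<beta> t) \<le> (1 + 1 / (1 - q)) * norm (t powr \<alpha>)) (at_right 0)"
    using eventually_at_right_real[of 0 "1::real"]
    by (auto elim!: eventually_mono simp: dyadic_majorant_nonneg)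
qed

lemma dyadic_majorant_bigo_eq:
  "dyadic_majorant \<alpha> \<alpha> \<in> O[at_right 0](\<lambda>t. t powr \<alpha> * \<bar>ln t\<bar>)"
proof (rule bigoI)
  have "dyadic_majorant \<alpha> \<alpha> t \<le> (2 + 1 / ln 2) * (t powr \<alpha> * \<bar>ln t\<bar>)"
    if t: "0 < t" "t < exp (-1)" for t
  proof -
    define n where "n = dyadic_index t"
    have "exp (-1) < (1::real)" by simp
    then have t1: "t < 1" using t by linarith
    have ln_t: "ln t \<le> -1" using t ln_less_cancel_iff[of t "exp (-1)"] by simp
    \<comment> \<open>From \<open>2^(n-1) t < 1\<close>, the number of dyadic blocks is at most \<open>1 + log 2 (1/t)\<close>.\<close>
    obtain p where p: "n = Suc p" using dyadic_index(1)[OF t(1) t1] by (cases n) (auto simp: n_def)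
    have "2 ^ p * t < 1" using dyadic_index(3)[OF t(1) t1] by (simp add: n_def[symmetric] p)
    then have "ln (2 ^ p * t) < 0" using t by (simp add: ln_less_zero)
    then have "real p * ln 2 + ln t < 0" using t by (simp add: ln_mult ln_realpow)
    then have "real n \<le> 1 + (- ln t) / ln 2" by (simp add: p field_simps)
    also have "\<dots> = 1 + 1 / ln 2 * \<bar>ln t\<bar>"
      using ln_t by simp
    also have "\<dots> \<le> \<bar>ln t\<bar> + 1 / ln 2 * \<bar>ln t\<bar>"
      using ln_t by simp
    also have "\<dots> = (1 + 1 / ln 2) * \<bar>ln t\<bar>"
      by (simp add: algebra_simps)
    finally have "1 + real n \<le> (2 + 1 / ln 2) * \<bar>ln t\<bar>"
      using ln_t by (simp add: algebra_simps)
    then have "t powr \<alpha> * (1 + real n) \<le> t powr \<alpha> * ((2 + 1 / ln 2) * \<bar>ln t\<bar>)"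
      by (rule mult_left_mono) simp
    then show ?thesis by (simp add: dyadic_majorant_def n_def algebra_simps)
  qed
  then show "eventually (\<lambda>t. norm (dyadic_majorant \<alpha> \<alpha> t) \<le> (2 + 1 / ln 2) * norm (t powr \<alpha> * \<bar>ln t\<bar>)) (at_right 0)"
    using eventually_at_right_real[of 0 "exp (-1) :: real"]
    by (auto elim!: eventually_mono simp: dyadic_majorant_nonneg abs_mult)
qed

locale orlicz_space_function = orlicz_space_norm +
  fixes f :: "real \<Rightarrow> complex"
  assumes in_SM: "in_SM Ms f"
begin

lemma f_in_L: "in_L f" and has_lux_norm_fourier_coeff: "has_lux_norm (fourier_coeff f)"
  using in_SM unfolding in_SM_def by auto

lemma has_lux_norm_coeff_tail: "has_lux_norm (coeff_tail n (fourier_coeff f))"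
  by (rule has_lux_norm_dominated[OF has_lux_norm_fourier_coeff, of 1]) (simp_all add: coeff_tail_def)

lemma
  assumes t: "t \<in> trig_polys (int n - 1)"
  shows has_lux_norm_fourier_coeff_diff: "has_lux_norm (fourier_coeff (\<lambda>x. f x - t x))"
    and N_coeff_tail_le: "N (coeff_tail n (fourier_coeff f)) \<le> N (fourier_coeff (\<lambda>x. f x - t x))"
proof -
  have t_coeff: "fourier_coeff t k = 0" if "int n \<le> \<bar>k\<bar>" for k
    using that by (intro fourier_coeff_trig_poly_eq_0[OF t]) auto
  have "has_lux_norm (fourier_coeff t)"
    using t_coeff by (intro has_lux_norm_finite_support[of "{-(int n - 1)..int n - 1}"]) auto
  then have neg: "has_lux_norm (\<lambda>k. - fourier_coeff t k)"
    by (rule has_lux_norm_dominated[of _ 1]) auto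
  have diff: "fourier_coeff (\<lambda>x. f x - t x) = (\<lambda>k. fourier_coeff f k + - fourier_coeff t k)"
    using fourier_coeff_diff_trig_poly[OF f_in_L t] by (simp add: fun_eq_iff)
  show *: "has_lux_norm (fourier_coeff (\<lambda>x. f x - t x))"
    unfolding diff by (rule has_lux_norm_add[OF has_lux_norm_fourier_coeff neg])
  have "cmod (coeff_tail n (fourier_coeff f) k) \<le> 1 * cmod (fourier_coeff (\<lambda>x. f x - t x) k)" for k
    using t_coeff[of k] by (simp add: coeff_tail_def diff)
  then show "N (coeff_tail n (fourier_coeff f)) \<le> N (fourier_coeff (\<lambda>x. f x - t x))"
    using N_dominated[OF *, of 1] by simp
qed

lemma N_coeff_tail_le_best_approx: "N (coeff_tail n (fourier_coeff f)) \<le> best_approx N f n"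
  unfolding best_approx_def fnorm_def
  using zero_in_trig_polys N_coeff_tail_le by (intro cInf_greatest) auto

lemma best_approx_le_N: "best_approx N f n \<le> N (fourier_coeff f)"
proof -
  have "fnorm N (\<lambda>x. f x - 0) \<in> (\<lambda>t. fnorm N (\<lambda>x. f x - t x)) ` trig_polys (int n - 1)"
    by (rule image_eqI[OF _ zero_in_trig_polys]) simp
  then have "best_approx N f n \<le> fnorm N (\<lambda>x. f x - 0)"
    unfolding best_approx_def using N_nonneg[OF has_lux_norm_fourier_coeff_diff]
    by (intro cInf_lower bdd_belowI[of _ 0]) (auto simp: fnorm_def)
  then show ?thesis by (simp add: fnorm_def)
qed

lemma norm_fourier_coeff_frac_diff_le:
  assumes \<alpha>: "\<alpha> > 0" and h: "\<bar>h\<bar> \<le> t"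
  shows "cmod (fourier_coeff (frac_diff \<alpha> h f) k)
      \<le> 2 powr \<alpha> * cmod (coeff_tail (2^n) (fourier_coeff f) k)
        + (\<Sum>m<n. (2^(m+1) * t) powr \<alpha> * cmod (coeff_tail (2^m) (fourier_coeff f) k))"
    (is "_ \<le> ?high + ?low")
proof -
  define \<mu> where "\<mu> = frac_diff_symbol \<alpha> (cis (- (of_int k * h)))"
  have coeff: "cmod (fourier_coeff (frac_diff \<alpha> h f) k) = cmod \<mu> * cmod (fourier_coeff f k)"
    by (simp add: fourier_coeff_frac_diff[OF f_in_L \<alpha>] \<mu>_def norm_mult)
  have low_nonneg: "0 \<le> ?low" and high_nonneg: "0 \<le> ?high" by (auto intro: sum_nonneg)
  consider "k = 0" | "2^n \<le> \<bar>k\<bar>" | "1 \<le> \<bar>k\<bar>" "\<bar>k\<bar> < 2^n" by linarith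
  then show ?thesis
  proof cases
    case 1
    then show ?thesis using coeff low_nonneg high_nonneg by (simp add: \<mu>_def frac_diff_symbol_1[OF \<alpha>])
  next
    case 2
    have "cmod \<mu> * cmod (fourier_coeff f k) \<le> ?high"
      using 2 norm_frac_diff_symbol_cis_le_2[OF \<alpha>] by (simp add: \<mu>_def coeff_tail_def mult_right_mono)
    then show ?thesis using coeff low_nonneg by simp
  next
    case 3
    then obtain m where m: "m < n" "2^m \<le> \<bar>k\<bar>" "\<bar>k\<bar> < 2^(m+1)"
      using exists_dyadic_block by blast
    \<comment> \<open>On the block \<open>2^m \<le> |k| < 2^(m+1)\<close> the symbol is at most \<open>|k h|^\<alpha> \<le> (2^(m+1) t)^\<alpha>\<close>.\<close>
    have "\<bar>real_of_int k\<bar> \<le> 2^(m+1)"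
      using m(3) by (metis of_int_abs of_int_le_iff of_int_numeral of_int_power less_imp_le)
    then have kh: "\<bar>of_int k * h\<bar> \<le> 2^(m+1) * t"
      using h unfolding abs_mult by (intro mult_mono) auto
    then have "cmod \<mu> \<le> (2^(m+1) * t) powr \<alpha>"
      using norm_frac_diff_symbol_cis_le_abs[OF \<alpha>, of "- (of_int k * h)"]
        powr_mono2[OF _ abs_ge_zero kh, of \<alpha>] \<alpha>
      by (simp add: \<mu>_def)
    then have "cmod \<mu> * cmod (fourier_coeff f k) \<le> (2^(m+1) * t) powr \<alpha> * cmod (coeff_tail (2^m) (fourier_coeff f) k)"
      using m(2) by (simp add: coeff_tail_def mult_right_mono)
    also have "\<dots> \<le> ?low"
      using m(1) by (intro member_le_sum) auto
    finally show ?thesis using coeff high_nonneg by linarith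
  qed
qed

lemma
  assumes \<alpha>: "\<alpha> > 0" and h: "\<bar>h\<bar> \<le> t"
  shows has_lux_norm_fourier_coeff_frac_diff: "has_lux_norm (fourier_coeff (frac_diff \<alpha> h f))"
    and fnorm_frac_diff_le:
      "fnorm N (frac_diff \<alpha> h f)
        \<le> 2 powr \<alpha> * best_approx N f (2^n) + (\<Sum>m<n. (2^(m+1) * t) powr \<alpha> * best_approx N f (2^m))"
proof -
  define r where "r i = (if i = n then 2 powr \<alpha> else (2^(i+1) * t) powr \<alpha>)" for i
  define d where "d i = coeff_tail (2^i) (fourier_coeff f)" for i
  have split: "(\<Sum>i\<le>n. r i * g i) = 2 powr \<alpha> * g n + (\<Sum>m<n. (2^(m+1) * t) powr \<alpha> * g m)" for g
    by (simp add: r_def lessThan_Suc_atMost[symmetric])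
  have "cmod (fourier_coeff (frac_diff \<alpha> h f) k) \<le> (\<Sum>i\<le>n. r i * cmod (d i k))" for k
    unfolding split d_def by (rule norm_fourier_coeff_frac_diff_le[OF \<alpha> h])
  note weighted = N_le_weighted_sum[OF finite_atMost _ _ this]
  show "has_lux_norm (fourier_coeff (frac_diff \<alpha> h f))"
    by (rule weighted(1)) (simp_all add: d_def r_def has_lux_norm_coeff_tail)
  have "fnorm N (frac_diff \<alpha> h f) \<le> (\<Sum>i\<le>n. r i * N (d i))"
    unfolding fnorm_def by (rule weighted(2)) (simp_all add: d_def r_def has_lux_norm_coeff_tail)
  also have "\<dots> \<le> (\<Sum>i\<le>n. r i * best_approx N f (2^i))"
    unfolding d_def by (intro sum_mono mult_left_mono N_coeff_tail_le_best_approx) (simp add: r_def)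
  finally show "fnorm N (frac_diff \<alpha> h f)
      \<le> 2 powr \<alpha> * best_approx N f (2^n) + (\<Sum>m<n. (2^(m+1) * t) powr \<alpha> * best_approx N f (2^m))"
    unfolding split .
qed

lemma
  assumes \<alpha>: "\<alpha> > 0" and t: "t \<ge> 0"
  shows modulus_nonneg: "0 \<le> modulus N \<alpha> f t"
    and modulus_le_dyadic:
      "modulus N \<alpha> f t
        \<le> 2 powr \<alpha> * best_approx N f (2^n) + (\<Sum>m<n. (2^(m+1) * t) powr \<alpha> * best_approx N f (2^m))"
proof -
  let ?S = "(\<lambda>h. fnorm N (frac_diff \<alpha> h f)) ` {h. \<bar>h\<bar> \<le> t}"
  have ne: "?S \<noteq> {}" using t by (auto intro: exI[of _ 0])
  have bound: "x \<le> 2 powr \<alpha> * best_approx N f (2^n) + (\<Sum>m<n. (2^(m+1) * t) powr \<alpha> * best_approx N f (2^m))"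
    if "x \<in> ?S" for x
    using that fnorm_frac_diff_le[OF \<alpha>] by auto
  then show "modulus N \<alpha> f t
      \<le> 2 powr \<alpha> * best_approx N f (2^n) + (\<Sum>m<n. (2^(m+1) * t) powr \<alpha> * best_approx N f (2^m))"
    unfolding modulus_def by (rule cSup_least[OF ne])
  have "0 \<le> fnorm N (frac_diff \<alpha> 0 f)"
    unfolding fnorm_def by (rule N_nonneg[OF has_lux_norm_fourier_coeff_frac_diff[OF \<alpha>, of 0 0]]) simp
  also have "\<dots> \<le> Sup ?S"
    using t bound by (intro cSup_upper bdd_aboveI) auto
  finally show "0 \<le> modulus N \<alpha> f t" unfolding modulus_def .
qed

lemma modulus_le_geometric_sum:
  assumes \<alpha>: "\<alpha> > 0" and \<beta>: "\<beta> \<ge> 0" and K: "K \<ge> 0"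
    and E: "\<And>j. j \<ge> 1 \<Longrightarrow> best_approx N f j \<le> K * real j powr - \<beta>"
    and t: "t > 0" and n: "1 \<le> 2^n * t"
  shows "modulus N \<alpha> f t \<le> K * 2 powr \<alpha> * (t powr \<beta> + t powr \<alpha> * (\<Sum>m<n. (2 powr (\<alpha> - \<beta>))^m))"
proof -
  have E2: "best_approx N f (2^m) \<le> K * (2^m) powr - \<beta>" for m
    using E[of "2^m"] by simp
  have high: "2 powr \<alpha> * best_approx N f (2^n) \<le> K * 2 powr \<alpha> * t powr \<beta>"
  proof -
    have "((2::real)^n) powr - \<beta> \<le> (1 / t) powr - \<beta>"
      using t n \<beta> by (intro powr_mono2') (auto simp: field_simps)
    also have "\<dots> = t powr \<beta>" using t by (simp add: powr_divide powr_minus)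
    finally show ?thesis
      using E2[of n] K by (simp add: mult.assoc order_trans[OF _ mult_left_mono])
  qed
  have low: "(2^(m+1) * t) powr \<alpha> * best_approx N f (2^m) \<le> K * 2 powr \<alpha> * (t powr \<alpha> * (2 powr (\<alpha> - \<beta>))^m)"
    for m
  proof -
    have "((2::real)^m) powr \<alpha> * (2^m) powr - \<beta> = (2 powr (\<alpha> - \<beta>))^m"
      by (simp add: powr_add[symmetric] powr_realpow[symmetric] powr_powr powr_power algebra_simps)
    moreover have "(2^(m+1) * t) powr \<alpha> = 2 powr \<alpha> * ((2::real)^m) powr \<alpha> * t powr \<alpha>"
      using t by (simp add: powr_mult)
    ultimately have "(2^(m+1) * t) powr \<alpha> * (K * (2^m) powr - \<beta>) = K * 2 powr \<alpha> * (t powr \<alpha> * (2 powr (\<alpha> - \<beta>))^m)"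
      by (simp add: algebra_simps)
    then show ?thesis using E2[of m] by (metis mult_left_mono powr_ge_zero)
  qed
  have "modulus N \<alpha> f t \<le> 2 powr \<alpha> * best_approx N f (2^n) + (\<Sum>m<n. (2^(m+1) * t) powr \<alpha> * best_approx N f (2^m))"
    using modulus_le_dyadic[OF \<alpha>] t by simp
  also have "\<dots> \<le> K * 2 powr \<alpha> * t powr \<beta> + (\<Sum>m<n. K * 2 powr \<alpha> * (t powr \<alpha> * (2 powr (\<alpha> - \<beta>))^m))"
    by (intro add_mono high sum_mono low)
  also have "\<dots> = K * 2 powr \<alpha> * (t powr \<beta> + t powr \<alpha> * (\<Sum>m<n. (2 powr (\<alpha> - \<beta>))^m))"
    by (simp add: sum_distrib_left algebra_simps)
  finally show ?thesis .
qed

lemma modulus_bigo_dyadic_majorant: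
  assumes \<alpha>: "\<alpha> > 0" and \<beta>: "\<beta> \<ge> 0"
    and E: "best_approx N f \<in> O(\<lambda>n. real n powr - \<beta>)"
  shows "modulus N \<alpha> f \<in> O[at_right 0](dyadic_majorant \<alpha> \<beta>)"
proof -
  obtain K where K: "K \<ge> 0" "\<And>j. j \<ge> 1 \<Longrightarrow> best_approx N f j \<le> K * real j powr - \<beta>"
    using bigo_powr_imp_uniform_bound[OF E \<beta> best_approx_le_N] by blast
  have "modulus N \<alpha> f t \<le> K * 2 powr \<alpha> * dyadic_majorant \<alpha> \<beta> t" if t: "0 < t" "t < 1" for t
    unfolding dyadic_majorant_def
    by (rule modulus_le_geometric_sum[OF \<alpha> \<beta> K t(1) dyadic_index(2)[OF t]])
  then have "eventually (\<lambda>t. norm (modulus N \<alpha> f t) \<le> K * 2 powr \<alpha> * norm (dyadic_majorant \<alpha> \<beta> t)) (at_right 0)"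
    using eventually_at_right_real[of 0 "1::real"] modulus_nonneg[OF \<alpha>]
    by (auto elim!: eventually_mono simp: dyadic_majorant_nonneg)
  then show ?thesis by (rule bigoI)
qed

end

theorem corollary4:
  fixes Ms :: "int \<Rightarrow> real \<Rightarrow> real" and f :: "real \<Rightarrow> complex"
    and N :: "(int \<Rightarrow> complex) \<Rightarrow> real" and \<alpha> \<beta> :: real
  assumes "\<forall>k. orlicz_fn (Ms k)"
    and "in_SM Ms f"
    and "N = lux_norm Ms \<or> N = orlicz_norm Ms"
    and "\<beta> > 0"
    and "(\<lambda>n. best_approx N f n) \<in> O(\<lambda>n. real n powr (- \<beta>))"
    and "\<alpha> > 0"
  shows "(\<beta> < \<alpha> \<longrightarrow> (\<lambda>t. modulus N \<alpha> f t) \<in> O[at_right 0](\<lambda>t. t powr \<beta>))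
       \<and> (\<beta> = \<alpha> \<longrightarrow> (\<lambda>t. modulus N \<alpha> f t) \<in> O[at_right 0](\<lambda>t. t powr \<alpha> * \<bar>ln t\<bar>))
       \<and> (\<beta> > \<alpha> \<longrightarrow> (\<lambda>t. modulus N \<alpha> f t) \<in> O[at_right 0](\<lambda>t. t powr \<alpha>))"
proof -
  interpret orlicz_space_function Ms N f
    using assms(1-3) by unfold_locales auto
  have "modulus N \<alpha> f \<in> O[at_right 0](dyadic_majorant \<alpha> \<beta>)"
    using assms(4-6) by (intro modulus_bigo_dyadic_majorant) auto
  then show ?thesis
    using landau_o.big_trans dyadic_majorant_bigo_lt dyadic_majorant_bigo_eq dyadic_majorant_bigo_gt
    by blast
qed

end
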